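(* Let $T$ be a non-star tree containing an edge $xy$ with $d_T(x)=1$ and $d_T(y)\ge 3$. Suppose that for every neighbor $y'\ne x$ of $y$, the tree $T_{(y',y)}$ is a neighbor $F$-tree of $y$ which is not a single vertex (i.e. not isomorphic to $P_1$). Then there exists a $(T,x)$-good 2-placement.
   Context: All graphs are finite, simple and undirected; $P_k$ is the path on $k$ vertices. A non-star tree is a tree not isomorphic to a star $K_{1,m}$ for any $m\ge0$. For an edge $ab$ of a tree $T$, $T_{(a,b)}$ denotes the connected component containing $a$ in $T-\{ab\}$; it is a neighbor $F$-tree of $b$ if it is a path with at most $3$ vertices and, when it has exactly $3$ vertices, $a$ is an end vertex of it. A permutation $\sigma$ of $V(T)$ is a 2-placement of $T$ if $\sigma(a)\sigma(b)\notin E(T)$ for every edge $ab\in E(T)$; $\sigma(T)\subseteq T^k$ means $dist_T(\sigma(a),\sigma(b))\le k$ for every edge $ab$ of $T$. A fixed-point-free permutation $\sigma$ of $V(T)$ is a $(T,x)$-good 2-placement if (distances and degrees in $T$): (1) $\sigma$ is a 2-placement of $T$; (2) $\sigma(T)\subseteq T^5$; (3) $dist(x,\sigma(x))=1$; (4) $dist(w,\sigma(w))\le 2$ for every neighbor $w$ of $x$; (5) $dist(w,\sigma(w))\le 4$ for every $w$ of degree $1$. *)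

theory Defs
  imports Main
begin

definition simple_graph :: "'a set \<Rightarrow> ('a \<Rightarrow> 'a \<Rightarrow> bool) \<Rightarrow> bool" where
  "simple_graph V E \<longleftrightarrow> finite V \<and> (\<forall>u v. E u v \<longrightarrow> u \<in> V \<and> v \<in> V)
     \<and> (\<forall>u v. E u v \<longrightarrow> E v u) \<and> (\<forall>u. \<not> E u u)"

definition walk :: "('a \<Rightarrow> 'a \<Rightarrow> bool) \<Rightarrow> 'a list \<Rightarrow> bool" where
  "walk E xs \<longleftrightarrow> xs \<noteq> [] \<and> (\<forall>i. Suc i < length xs \<longrightarrow> E (xs ! i) (xs ! Suc i))"

definition connected_graph :: "'a set \<Rightarrow> ('a \<Rightarrow> 'a \<Rightarrow> bool) \<Rightarrow> bool" where
  "connected_graph V E \<longleftrightarrow> V \<noteq> {} \<and>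
     (\<forall>u\<in>V. \<forall>v\<in>V. \<exists>xs. walk E xs \<and> hd xs = u \<and> last xs = v)"

definition has_cycle :: "('a \<Rightarrow> 'a \<Rightarrow> bool) \<Rightarrow> bool" where
  "has_cycle E \<longleftrightarrow> (\<exists>vs. 3 \<le> length vs \<and> distinct vs \<and> walk E vs \<and> E (last vs) (hd vs))"

definition is_tree :: "'a set \<Rightarrow> ('a \<Rightarrow> 'a \<Rightarrow> bool) \<Rightarrow> bool" where
  "is_tree V E \<longleftrightarrow> simple_graph V E \<and> connected_graph V E \<and> \<not> has_cycle E"

definition degree :: "'a set \<Rightarrow> ('a \<Rightarrow> 'a \<Rightarrow> bool) \<Rightarrow> 'a \<Rightarrow> nat" where
  "degree V E v = card {w \<in> V. E v w}"

definition gdist :: "('a \<Rightarrow> 'a \<Rightarrow> bool) \<Rightarrow> 'a \<Rightarrow> 'a \<Rightarrow> nat" where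
  "gdist E u v = (LEAST n. \<exists>xs. walk E xs \<and> hd xs = u \<and> last xs = v \<and> length xs = Suc n)"

definition is_star :: "'a set \<Rightarrow> ('a \<Rightarrow> 'a \<Rightarrow> bool) \<Rightarrow> bool" where
  "is_star V E \<longleftrightarrow> (\<exists>c\<in>V. (\<forall>v\<in>V. v \<noteq> c \<longrightarrow> E c v) \<and> (\<forall>u v. E u v \<longrightarrow> u = c \<or> v = c))"

definition del_edge :: "('a \<Rightarrow> 'a \<Rightarrow> bool) \<Rightarrow> 'a \<Rightarrow> 'a \<Rightarrow> 'a \<Rightarrow> 'a \<Rightarrow> bool" where
  "del_edge E a b = (\<lambda>u v. E u v \<and> {u, v} \<noteq> {a, b})"

text \<open>Vertex set of T_(a,b): component containing a in T - {ab}.\<close>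
definition branch :: "('a \<Rightarrow> 'a \<Rightarrow> bool) \<Rightarrow> 'a \<Rightarrow> 'a \<Rightarrow> 'a set" where
  "branch E a b = {v. \<exists>xs. walk (del_edge E a b) xs \<and> hd xs = a \<and> last xs = v}"

definition path_seq :: "'a set \<Rightarrow> ('a \<Rightarrow> 'a \<Rightarrow> bool) \<Rightarrow> 'a list \<Rightarrow> bool" where
  "path_seq C E vs \<longleftrightarrow> vs \<noteq> [] \<and> distinct vs \<and> set vs = C \<and>
     (\<forall>u\<in>C. \<forall>v\<in>C. E u v \<longleftrightarrow> (\<exists>i. Suc i < length vs \<and> {vs ! i, vs ! Suc i} = {u, v}))"

definition neighbor_F_tree :: "('a \<Rightarrow> 'a \<Rightarrow> bool) \<Rightarrow> 'a \<Rightarrow> 'a \<Rightarrow> bool" where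
  "neighbor_F_tree E a b \<longleftrightarrow>
     (\<exists>vs. path_seq (branch E a b) (del_edge E a b) vs \<and> length vs \<le> 3 \<and>
        (length vs = 3 \<longrightarrow> a = hd vs \<or> a = last vs))"

definition good_2_placement :: "'a set \<Rightarrow> ('a \<Rightarrow> 'a \<Rightarrow> bool) \<Rightarrow> 'a \<Rightarrow> ('a \<Rightarrow> 'a) \<Rightarrow> bool" where
  "good_2_placement V E x \<sigma> \<longleftrightarrow>
     bij_betw \<sigma> V V \<and> (\<forall>v\<in>V. \<sigma> v \<noteq> v) \<and>
     (\<forall>a b. E a b \<longrightarrow> \<not> E (\<sigma> a) (\<sigma> b)) \<and>
     (\<forall>a b. E a b \<longrightarrow> gdist E (\<sigma> a) (\<sigma> b) \<le> 5) \<and>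
     gdist E x (\<sigma> x) = 1 \<and>
     (\<forall>w\<in>V. E x w \<longrightarrow> gdist E w (\<sigma> w) \<le> 2) \<and>
     (\<forall>w\<in>V. degree V E w = 1 \<longrightarrow> gdist E w (\<sigma> w) \<le> 4)"

end

theory Submission
  imports Defs
begin

text \<open>
  The hypotheses force T to be a spider: besides the leaf x, every neighbour a of y carries a
  leg a--b or a--b--c hanging off y, and distinct legs are disjoint and non-adjacent.
  List the other neighbours of y as a1, ..., ak and let G shift y, a1, ..., ak onto
  a1, ..., ak, x. The placement sends x to y, every hub vertex u in {y, a1, ..., ak} to the
  second vertex of the leg at G u (to x if G u = x), and inside a leg a--b--c sends b to c and
  c to a (b to a for a leg a--b). Each edge is then mapped to a non-adjacent pair (two vertices
  of different legs, x or y together with a non-root leg vertex, or the two ends of a leg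
  a--b--c), and every distance bound is witnessed by an explicit walk through y.
\<close>

section \<open>Walks and distance\<close>

lemma walk_singleton [simp]: "walk E [u]"
  by (simp add: walk_def)

lemma walk_Cons_Cons [simp]: "walk E (u # v # vs) \<longleftrightarrow> E u v \<and> walk E (v # vs)"
  by (auto simp: walk_def nth_Cons split: nat.split)

lemma walk_snoc: "xs \<noteq> [] \<Longrightarrow> walk E (xs @ [w]) \<longleftrightarrow> walk E xs \<and> E (last xs) w"
  by (induction xs rule: induct_list012) simp_all

lemma walk_take: "walk E xs \<Longrightarrow> 0 < n \<Longrightarrow> walk E (take n xs)"
  unfolding walk_def by auto

lemma walk_rev:
  assumes "\<And>u v. E u v \<Longrightarrow> E v u"
  shows "walk E xs \<Longrightarrow> walk E (rev xs)"
proof (induction xs rule: induct_list012)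
  case (3 u v vs)
  then have "walk E (rev (v # vs))" "E v u" by (auto intro: assms)
  then show ?case using walk_snoc[of "rev (v # vs)" E u] by (simp add: last_rev)
qed simp_all

lemma list_enters_set:
  "xs \<noteq> [] \<Longrightarrow> hd xs \<notin> S \<Longrightarrow> last xs \<in> S \<Longrightarrow> \<exists>i. Suc i < length xs \<and> xs ! i \<notin> S \<and> xs ! Suc i \<in> S"
proof (induction xs rule: induct_list012)
  case (3 u v vs)
  show ?case
  proof (cases "v \<in> S")
    case True
    then show ?thesis using "3.prems" by (intro exI[of _ 0]) simp
  next
    case False
    then obtain i where "Suc i < length (v # vs)" "(v # vs) ! i \<notin> S" "(v # vs) ! Suc i \<in> S"
      using "3.IH"(2) "3.prems"(3) by auto
    then show ?thesis by (intro exI[of _ "Suc i"]) simp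
  qed
qed simp_all

lemma gdist_le_walk: "walk E (u # vs) \<Longrightarrow> gdist E u (last (u # vs)) \<le> length vs"
  unfolding gdist_def by (rule Least_le) auto

lemma gdist_adjacent: "E u v \<Longrightarrow> u \<noteq> v \<Longrightarrow> gdist E u v = 1"
  unfolding gdist_def
proof (rule Least_equality)
  show "E u v \<Longrightarrow> \<exists>xs. walk E xs \<and> hd xs = u \<and> last xs = v \<and> length xs = Suc 1"
    by (intro exI[of _ "[u, v]"]) simp
  show "u \<noteq> v \<Longrightarrow> \<exists>xs. walk E xs \<and> hd xs = u \<and> last xs = v \<and> length xs = Suc n \<Longrightarrow> 1 \<le> n" for n
    by (cases n) (auto simp: length_Suc_conv)
qed

lemma gdist_commute:
  assumes "\<And>u v. E u v \<Longrightarrow> E v u"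
  shows "gdist E u v = gdist E v u"
proof -
  have rev: "walk E (rev xs) \<and> hd (rev xs) = last xs \<and> last (rev xs) = hd xs \<and> length (rev xs) = length xs"
    if "walk E xs" for xs
    using that walk_rev[OF assms that] by (cases xs) (auto simp: walk_def hd_rev last_rev)
  have "(\<lambda>n. \<exists>xs. walk E xs \<and> hd xs = u \<and> last xs = v \<and> length xs = Suc n)
    = (\<lambda>n. \<exists>xs. walk E xs \<and> hd xs = v \<and> last xs = u \<and> length xs = Suc n)"
    by (intro ext iffI) (metis rev)+
  then show ?thesis unfolding gdist_def by simp
qed

section \<open>Branches at a vertex\<close>

lemma branch_self: "a \<in> branch E a y"
  unfolding branch_def by (intro CollectI exI[of _ "[a]"]) simp

lemma branch_step:
  assumes "u \<in> branch E a y" "E u w" "{u, w} \<noteq> {a, y}"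
  shows "w \<in> branch E a y"
proof -
  obtain xs where xs: "walk (del_edge E a y) xs" "hd xs = a" "last xs = u"
    using assms(1) unfolding branch_def by blast
  then have "xs \<noteq> []" by (simp add: walk_def)
  then have "walk (del_edge E a y) (xs @ [w]) \<and> hd (xs @ [w]) = a \<and> last (xs @ [w]) = w"
    using xs assms(2,3) by (simp add: walk_snoc del_edge_def)
  then show ?thesis unfolding branch_def by blast
qed

lemma branch_prefix:
  assumes "walk (del_edge E a y) ws" "hd ws = a" "i < length ws"
  shows "ws ! i \<in> branch E a y"
proof -
  have "walk (del_edge E a y) (take (Suc i) ws)" using walk_take[OF assms(1)] by simp
  moreover have "hd (take (Suc i) ws) = a" using assms(2,3) by (cases ws) auto
  moreover have "last (take (Suc i) ws) = ws ! i" using assms(3) by (simp add: take_Suc_conv_app_nth)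
  ultimately show ?thesis unfolding branch_def by blast
qed

lemma branch_closed:
  assumes "u \<in> branch E a y" "E u v" "y \<notin> branch E a y"
  shows "v \<in> branch E a y \<or> (u = a \<and> v = y)"
  using branch_step[OF assms(1,2)] assms(1,3) by (auto simp: doubleton_eq_iff)

lemma walk_from_hub:
  "walk E xs \<Longrightarrow> hd xs = y \<Longrightarrow> last xs = y \<or> (\<exists>a. E y a \<and> last xs \<in> branch E a y)"
proof (induction xs rule: rev_induct)
  case (snoc w xs)
  show ?case
  proof (cases "xs = []")
    case False
    then have w: "walk E xs" "E (last xs) w" "hd xs = y"
      using snoc.prems walk_snoc[of xs E w] by auto
    from snoc.IH[OF w(1,3)] show ?thesis
    proof
      assume "last xs = y"
      then show ?thesis using w(2) branch_self[of w E y] by auto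
    next
      assume "\<exists>a. E y a \<and> last xs \<in> branch E a y"
      then obtain a where a: "E y a" "last xs \<in> branch E a y" by blast
      then show ?thesis
        using branch_step[OF a(2) w(2)] branch_self[of a E y] by (auto simp: doubleton_eq_iff)
    qed
  qed (use snoc.prems in simp)
qed (simp add: walk_def)

lemma branch_at_leaf:
  assumes "\<And>w. E x w \<Longrightarrow> w = y"
  shows "branch E x y = {x}"
proof (intro equalityI subsetI)
  fix v assume "v \<in> branch E x y"
  then obtain ws where ws: "walk (del_edge E x y) ws" "hd ws = x" "last ws = v"
    unfolding branch_def by blast
  show "v \<in> {x}"
  proof (rule ccontr)
    assume "v \<notin> {x}"
    then obtain i where "Suc i < length ws" "ws ! i \<notin> - {x}" "ws ! Suc i \<in> - {x}"
      using list_enters_set[of ws "- {x}"] ws by (auto simp: walk_def)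
    with ws(1) assms show False unfolding walk_def del_edge_def by fastforce
  qed
qed (simp add: branch_self)

lemma branch_absorbs_hub_neighbours:
  assumes "y \<in> branch E a y"
  shows "insert y {w. E y w} \<subseteq> branch E a y"
proof
  fix w assume "w \<in> insert y {w. E y w}"
  then show "w \<in> branch E a y"
    using assms branch_self[of a E y] branch_step[OF assms, of w] by (cases "w = a") auto
qed

lemma branches_disjoint:
  assumes sym: "\<And>u v. E u v \<Longrightarrow> E v u"
    and "E y a'" "a \<noteq> a'" "y \<notin> branch E a y" "y \<notin> branch E a' y"
  shows "branch E a y \<inter> branch E a' y = {}"
proof (rule ccontr)
  assume "branch E a y \<inter> branch E a' y \<noteq> {}"
  then obtain v where v: "v \<in> branch E a y" "v \<in> branch E a' y" by blast
  have "a' \<notin> branch E a y"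
    using branch_closed[of a' E a y y] assms by (auto intro: sym)
  moreover obtain ws where ws: "walk (del_edge E a' y) ws" "hd ws = a'" "last ws = v"
    using v(2) unfolding branch_def by blast
  ultimately obtain i where i: "Suc i < length ws" "ws ! i \<notin> branch E a y" "ws ! Suc i \<in> branch E a y"
    using list_enters_set[of ws "branch E a y"] ws v(1) by (auto simp: walk_def)
  have "E (ws ! Suc i) (ws ! i)"
    using ws(1) i(1) sym unfolding walk_def del_edge_def by blast
  then have "ws ! i = y" using branch_closed[OF i(3) _ assms(4)] i(2) by blast
  moreover have "ws ! i \<in> branch E a' y" using branch_prefix[OF ws(1,2)] i(1) by simp
  ultimately show False using assms(5) by simp
qed

section \<open>Paths with at most three vertices\<close>

lemma path_seq_adjacent_iff:
  assumes "path_seq C R vs" "u \<in> C" "v \<in> C"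
  shows "R u v \<longleftrightarrow> (\<exists>i. Suc i < length vs \<and> {vs ! i, vs ! Suc i} = {u, v})"
  using assms unfolding path_seq_def by blast

lemma path_seq_adjacent:
  assumes "path_seq C R vs" "Suc i < length vs"
  shows "R (vs ! i) (vs ! Suc i)" "R (vs ! Suc i) (vs ! i)"
proof -
  have C: "vs ! i \<in> C" "vs ! Suc i \<in> C"
    using assms nth_mem[of i vs] nth_mem[of "Suc i" vs] unfolding path_seq_def by auto
  show "R (vs ! i) (vs ! Suc i)"
    using path_seq_adjacent_iff[OF assms(1) C] assms(2) by blast
  show "R (vs ! Suc i) (vs ! i)"
    using path_seq_adjacent_iff[OF assms(1) C(2,1)] assms(2) insert_commute by blast
qed

lemma path_seq_ends_nonadjacent:
  assumes "path_seq C R [p, q, r]"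
  shows "\<not> R p r" "\<not> R r p"
proof -
  have d: "distinct [p, q, r]" and "set [p, q, r] = C"
    using assms unfolding path_seq_def by blast+
  then have C: "p \<in> C" "r \<in> C" by auto
  have "\<not> (\<exists>i. Suc i < length [p, q, r] \<and> {[p, q, r] ! i, [p, q, r] ! Suc i} = {p, r})"
  proof
    assume "\<exists>i. Suc i < length [p, q, r] \<and> {[p, q, r] ! i, [p, q, r] ! Suc i} = {p, r}"
    then obtain i where "Suc i < length [p, q, r]" "{[p, q, r] ! i, [p, q, r] ! Suc i} = {p, r}"
      by blast
    moreover from this(1) have "i = 0 \<or> i = 1" by auto
    ultimately have "{p, q} = {p, r} \<or> {q, r} = {p, r}" by (elim disjE) simp_all
    with d show False by (simp add: doubleton_eq_iff)
  qed
  then show "\<not> R p r" "\<not> R r p"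
    using path_seq_adjacent_iff[OF assms C] path_seq_adjacent_iff[OF assms C(2,1)]
    by (simp_all add: insert_commute[of r p])
qed

lemma path_seq_end_shape:
  assumes vs: "path_seq C R vs" "2 \<le> length vs" "length vs \<le> 3" "a \<in> C"
    and end_vertex: "length vs = 3 \<Longrightarrow> a = hd vs \<or> a = last vs"
  obtains b c where "C = {a, b, c}" "a \<noteq> b" "R a b" "c \<noteq> a" "c = b \<or> R b c \<and> \<not> R a c"
proof -
  have C: "C = set vs" and d: "distinct vs" using vs(1) unfolding path_seq_def by blast+
  have adj: "R (vs ! i) (vs ! Suc i)" "R (vs ! Suc i) (vs ! i)" if "Suc i < length vs" for i
    using path_seq_adjacent[OF vs(1) that] by auto
  consider "length vs = 2" | "length vs = 3" using vs(2,3) by linarith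
  then show thesis
  proof cases
    case 1
    then obtain p q where vs2: "vs = [p, q]"
      by (metis One_nat_def Suc_1 length_0_conv length_Suc_conv)
    then have "R p q" "R q p" "p \<noteq> q" "C = {p, q}" using adj[of 0] C d by auto
    moreover have "a = p \<or> a = q" using vs(4) C vs2 by auto
    ultimately show thesis
    proof (elim disjE)
      show "a = p \<Longrightarrow> thesis" using that[of q q] \<open>R p q\<close> \<open>p \<noteq> q\<close> \<open>C = {p, q}\<close> by simp
      show "a = q \<Longrightarrow> thesis" using that[of p p] \<open>R q p\<close> \<open>p \<noteq> q\<close> \<open>C = {p, q}\<close> by (simp add: insert_commute)
    qed
  next
    case 2
    then obtain p q r where vs3: "vs = [p, q, r]"
      by (auto simp: numeral_3_eq_3 length_Suc_conv)
    then have R: "R p q" "R q p" "R q r" "R r q" using adj[of 0] adj[of 1] by simp_all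
    have nR: "\<not> R p r" "\<not> R r p" using vs(1) unfolding vs3 by (rule path_seq_ends_nonadjacent)+
    have C3: "distinct [p, q, r]" "C = {p, q, r}" using C d vs3 by simp_all
    have "a = p \<or> a = r" using end_vertex 2 vs3 by simp
    then show thesis
    proof
      show "a = p \<Longrightarrow> thesis" using that[of q r] R nR C3 by auto
      show "a = r \<Longrightarrow> thesis" using that[of q p] R nR C3 by (auto simp: insert_commute)
    qed
  qed
qed

section \<open>Spiders and their 2-placement\<close>

lemma shift_bijection_exists:
  assumes "finite A" "A \<noteq> {}" "x \<notin> A" "y \<notin> A"
  obtains G where "bij_betw G (insert y A) (insert x A)" "G y \<in> A" "\<And>a. a \<in> A \<Longrightarrow> G a \<noteq> a"
proof -
  obtain ns where ns: "distinct ns" "set ns = A" using finite_distinct_list[OF assms(1)] by blast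
  define xs where "xs = y # ns"
  define ys where "ys = ns @ [x]"
  have dist: "distinct xs" "distinct ys" and len: "length ys = length xs"
    using ns assms unfolding xs_def ys_def by auto
  have bij_xs: "bij_betw ((!) xs) {..<length xs} (insert y A)"
    by (rule bij_betw_nth) (use dist ns in \<open>auto simp: xs_def\<close>)
  have bij_ys: "bij_betw ((!) ys) {..<length xs} (insert x A)"
    by (rule bij_betw_nth) (use dist ns len in \<open>auto simp: ys_def\<close>)
  define G where "G = (!) ys \<circ> inv_into {..<length xs} ((!) xs)"
  have G_nth: "G (xs ! i) = ys ! i" if "i < length xs" for i
    using inv_into_f_f[OF bij_betw_imp_inj_on[OF bij_xs]] that by (simp add: G_def)
  show thesis
  proof
    show "bij_betw G (insert y A) (insert x A)"
      unfolding G_def by (rule bij_betw_trans[OF bij_betw_inv_into[OF bij_xs] bij_ys])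
    show "G y \<in> A"
      using G_nth[of 0] ns assms(2) by (cases ns) (auto simp: xs_def ys_def)
    fix a assume "a \<in> A"
    then obtain j where j: "j < length ns" "a = ns ! j" using ns by (metis in_set_conv_nth)
    then have "G a = ys ! Suc j" "a = ys ! j" using G_nth[of "Suc j"] by (auto simp: xs_def ys_def nth_append)
    then show "G a \<noteq> a" using dist(2) j(1) by (simp add: nth_eq_iff_index_eq ys_def)
  qed
qed

text \<open>The leg at a is the path a--b a--c a; a leg with only two vertices is encoded by c a = b a.\<close>

locale spider =
  fixes V :: "'a set" and E :: "'a \<Rightarrow> 'a \<Rightarrow> bool" and x y :: 'a
    and A :: "'a set" and b c :: "'a \<Rightarrow> 'a"
  assumes sym: "\<And>u v. E u v \<Longrightarrow> E v u"
    and irrefl: "\<And>u. \<not> E u u"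
    and adj_in_V: "\<And>u v. E u v \<Longrightarrow> u \<in> V"
    and finite_V: "finite V"
    and adj_x: "\<And>w. E x w \<longleftrightarrow> w = y"
    and adj_y: "\<And>w. E y w \<longleftrightarrow> w = x \<or> w \<in> A"
    and A_nonempty: "A \<noteq> {}"
    and x_notin_A: "x \<notin> A"
    and V_cover: "\<And>v. v \<in> V \<Longrightarrow> v = x \<or> v = y \<or> (\<exists>a\<in>A. v \<in> {a, b a, c a})"
    and legs_disjoint:
      "\<And>a a' v. a \<in> A \<Longrightarrow> a' \<in> A \<Longrightarrow> v \<in> {a, b a, c a} \<Longrightarrow> v \<in> {a', b a', c a'} \<Longrightarrow> a = a'"
    and y_notin_leg: "\<And>a. a \<in> A \<Longrightarrow> y \<notin> {a, b a, c a}"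
    and leg_closed:
      "\<And>a u v. a \<in> A \<Longrightarrow> u \<in> {a, b a, c a} \<Longrightarrow> E u v \<Longrightarrow> v \<in> {a, b a, c a} \<or> (u = a \<and> v = y)"
    and leg_edge: "\<And>a. a \<in> A \<Longrightarrow> E a (b a)"
    and leg_tip: "\<And>a. a \<in> A \<Longrightarrow> c a \<noteq> a"
    and long_leg: "\<And>a. a \<in> A \<Longrightarrow> c a \<noteq> b a \<Longrightarrow> E (b a) (c a) \<and> \<not> E a (c a)"
begin

lemma x_ne_y: "x \<noteq> y"
  using adj_x[of y] irrefl[of x] by auto

lemma y_notin_A: "y \<notin> A"
  using adj_y[of y] irrefl[of y] by auto

lemma finite_A: "finite A"
proof (rule finite_subset[OF _ finite_V])
  show "A \<subseteq> V"
  proof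
    fix a assume "a \<in> A"
    then have "E a y" using adj_y[of a] sym by blast
    then show "a \<in> V" by (rule adj_in_V)
  qed
qed

lemma adjacent_simps [simp]:
  "E x y" "E y x"
  "a \<in> A \<Longrightarrow> E y a" "a \<in> A \<Longrightarrow> E a y"
  "a \<in> A \<Longrightarrow> E a (b a)" "a \<in> A \<Longrightarrow> E (b a) a"
  "a \<in> A \<Longrightarrow> c a \<noteq> b a \<Longrightarrow> E (b a) (c a)" "a \<in> A \<Longrightarrow> c a \<noteq> b a \<Longrightarrow> E (c a) (b a)"
  using adj_x[of y] adj_y[of x] adj_y[of a] leg_edge[of a] long_leg[of a]
    sym[of y a] sym[of a "b a"] sym[of "b a" "c a"]
  by simp_all

lemma in_V [simp]: "x \<in> V" "y \<in> V" "a \<in> A \<Longrightarrow> a \<in> V" "a \<in> A \<Longrightarrow> b a \<in> V" "a \<in> A \<Longrightarrow> c a \<in> V"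
  using adj_in_V[of x y] adj_in_V[of y x] adj_in_V[of a y] adj_in_V[of "b a" a] adj_in_V[of "c a" "b a"]
  by (simp_all, cases "c a = b a") simp_all

lemma x_notin_leg: "a \<in> A \<Longrightarrow> x \<notin> {a, b a, c a}"
  using leg_closed[of a x y] y_notin_leg[of a] x_notin_A by auto

lemma b_ne:
  assumes "a \<in> A"
  shows "b a \<noteq> a" "b a \<noteq> x" "b a \<noteq> y"
proof -
  show "b a \<noteq> a" using irrefl leg_edge[OF assms] by metis
  show "b a \<noteq> x" "b a \<noteq> y" using x_notin_leg[OF assms] y_notin_leg[OF assms] by blast+
qed

lemma b_notin_A: "a \<in> A \<Longrightarrow> b a \<notin> A"
  using legs_disjoint[of a "b a" "b a"] b_ne(1)[of a] by auto

lemma legs_nonadjacent: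
  "a \<in> A \<Longrightarrow> a' \<in> A \<Longrightarrow> a \<noteq> a' \<Longrightarrow> u \<in> {a, b a, c a} \<Longrightarrow> v \<in> {a', b a', c a'} \<Longrightarrow> \<not> E u v"
  using leg_closed[of a u v] legs_disjoint[of a a' v] y_notin_leg[of a'] by auto

lemma vertex_cases:
  assumes "v \<in> V"
  obtains "v = x" | "v = y" | a where "a \<in> A" "v = a" | a where "a \<in> A" "v = b a"
    | a where "a \<in> A" "c a \<noteq> b a" "v = c a"
  using V_cover[OF assms] by (metis insert_iff singletonD)

lemma edge_cases:
  assumes "E u v"
  obtains "{u, v} = {x, y}" | a where "a \<in> A" "{u, v} = {y, a}"
    | a where "a \<in> A" "{u, v} = {a, b a}" | a where "a \<in> A" "c a \<noteq> b a" "{u, v} = {b a, c a}"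
proof -
  have "u \<in> V" using adj_in_V[OF assms] .
  then show thesis
  proof (cases rule: vertex_cases)
    case 1 then show thesis using that(1) assms adj_x by auto
  next
    case 2 then show thesis using that(1,2) assms adj_y by (auto simp: insert_commute)
  next
    case (3 a)
    then have "v = b a \<or> v = c a \<or> v = y" using leg_closed[of a u v] assms irrefl[of a] by auto
    moreover have "v \<noteq> c a \<or> c a = b a" using 3 assms long_leg[of a] by auto
    ultimately show thesis using 3 that(2)[of a] that(3)[of a] by (auto simp: insert_commute)
  next
    case (4 a)
    then have "v = a \<or> v = c a" using leg_closed[of a u v] assms irrefl b_ne(1)[of a] by auto
    moreover have "v \<noteq> c a \<or> c a \<noteq> b a" using 4 assms irrefl by auto
    ultimately show thesis using 4 that(3)[of a] that(4)[of a] by (auto simp: insert_commute)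
  next
    case (5 a)
    then have "v = a \<or> v = b a" using leg_closed[of a u v] assms irrefl leg_tip[of a] by auto
    moreover have "v \<noteq> a" using 5 assms long_leg[of a] sym by blast
    ultimately show thesis using 5 that(4)[of a] by (auto simp: insert_commute)
  qed
qed

definition leg_root :: "'a \<Rightarrow> 'a" where
  "leg_root v = (THE a. a \<in> A \<and> v \<in> {a, b a, c a})"

lemma leg_root_eq: "a \<in> A \<Longrightarrow> v \<in> {a, b a, c a} \<Longrightarrow> leg_root v = a"
  unfolding leg_root_def using legs_disjoint by (intro the_equality) blast+

definition separated :: "'a \<Rightarrow> 'a \<Rightarrow> bool" where
  "separated u v \<longleftrightarrow> \<not> E u v \<and> gdist E u v \<le> 5"

lemma separated_commute: "separated u v \<longleftrightarrow> separated v u"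
  unfolding separated_def using sym gdist_commute[of E] by metis

end

locale spider_shift = spider +
  fixes G :: "'a \<Rightarrow> 'a"
  assumes G_bij: "bij_betw G (insert y A) (insert x A)"
    and G_y: "G y \<in> A"
    and G_no_fixpoint: "\<And>a. a \<in> A \<Longrightarrow> G a \<noteq> a"
begin

definition hub_image :: "'a \<Rightarrow> 'a" where
  "hub_image u = (if G u = x then x else b (G u))"

definition placement :: "'a \<Rightarrow> 'a" where
  "placement v = (if v = x then y else if v \<in> insert y A then hub_image v
     else let a = leg_root v in if v = b a \<and> c a \<noteq> b a then c a else a)"

lemma placement_x: "placement x = y"
  by (simp add: placement_def)

lemma placement_hub: "u \<in> insert y A \<Longrightarrow> placement u = hub_image u"
  using x_ne_y x_notin_A by (auto simp: placement_def)

lemma placement_b: "a \<in> A \<Longrightarrow> placement (b a) = (if c a = b a then a else c a)"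
  using b_ne[of a] b_notin_A[of a] leg_root_eq[of a "b a"] by (auto simp: placement_def)

lemma placement_c:
  assumes "a \<in> A" "c a \<noteq> b a"
  shows "placement (c a) = a"
proof -
  have "c a \<noteq> x" "c a \<noteq> y" using x_notin_leg[OF assms(1)] y_notin_leg[OF assms(1)] by auto
  moreover have "c a \<notin> A" using legs_disjoint[of a "c a" "c a"] leg_tip[of a] assms(1) by auto
  ultimately show ?thesis using leg_root_eq[of a "c a"] assms by (simp add: placement_def)
qed

lemma hub_image_cases:
  assumes "u \<in> insert y A"
  obtains "u \<in> A" "hub_image u = x" | "G u \<in> A" "hub_image u = b (G u)"
proof (cases "G u = x")
  case True
  then have "u \<in> A" using assms G_y x_notin_A by auto
  then show thesis using that(1) True by (simp add: hub_image_def)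
next
  case False
  then have "G u \<in> A" using bij_betw_apply[OF G_bij assms] by simp
  then show thesis using that(2) False by (simp add: hub_image_def)
qed

lemma placement_y: "placement y = b (G y)"
proof -
  have "G y \<noteq> x" using G_y x_notin_A by blast
  then show ?thesis by (simp add: placement_hub hub_image_def)
qed

lemma G_inj: "u \<in> insert y A \<Longrightarrow> u' \<in> insert y A \<Longrightarrow> G u = G u' \<Longrightarrow> u = u'"
  by (rule inj_onD[OF bij_betw_imp_inj_on[OF G_bij]])

lemma G_onto:
  assumes "t \<in> insert x A"
  obtains u where "u \<in> insert y A" "G u = t"
proof -
  have "t \<in> G ` insert y A" using assms bij_betw_imp_surj_on[OF G_bij] by simp
  then show thesis using that by blast
qed

lemma placement_in_V:
  assumes "v \<in> V"
  shows "placement v \<in> V"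
  using assms
proof (cases rule: vertex_cases)
  case 2
  then show ?thesis using G_y by (simp add: placement_y)
next
  case (3 a)
  from insertI2[OF 3(1)] show ?thesis using 3 by (cases rule: hub_image_cases) (simp_all add: placement_hub)
qed (simp_all add: placement_x placement_b placement_c)

lemma placement_onto:
  assumes "v \<in> V"
  shows "v \<in> placement ` V"
  using assms
proof (cases rule: vertex_cases)
  case 1
  then obtain u where "u \<in> insert y A" "G u = x" using G_onto by blast
  then have "u \<in> V" "placement u = v" using 1 by (auto simp: placement_hub hub_image_def)
  then show ?thesis by (metis image_eqI)
next
  case 2
  then show ?thesis using placement_x by (metis image_eqI in_V(1))
next
  case (3 a)
  then have "placement (if c a = b a then b a else c a) = v"
    using placement_b[of a] placement_c[of a] by (cases "c a = b a") simp_all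
  then show ?thesis using 3 by (metis image_eqI in_V(4,5))
next
  case (4 a)
  then obtain u where "u \<in> insert y A" "G u = a" using G_onto by blast
  then have "u \<in> V" "placement u = v" using 4 x_notin_A by (auto simp: placement_hub hub_image_def)
  then show ?thesis by (metis image_eqI)
next
  case (5 a)
  then have "placement (b a) = v" using placement_b[of a] by simp
  then show ?thesis using 5 by (metis image_eqI in_V(4))
qed

lemma placement_bij: "bij_betw placement V V"
proof -
  have "placement ` V = V" using placement_in_V placement_onto by blast
  then show ?thesis using finite_surj_inj[OF finite_V] by (simp add: bij_betw_def)
qed

lemma placement_no_fixpoint:
  assumes "v \<in> V"
  shows "placement v \<noteq> v"
  using assms
proof (cases rule: vertex_cases)
  case 1
  then show ?thesis using x_ne_y by (simp add: placement_x)
next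
  case 2
  then show ?thesis using G_y b_ne(3) by (simp add: placement_y)
next
  case (3 a)
  from insertI2[OF 3(1)] show ?thesis
  proof (cases rule: hub_image_cases)
    case 1
    then show ?thesis using 3 x_notin_A by (auto simp: placement_hub)
  next
    case 2
    then show ?thesis using 3 b_notin_A[of "G a"] by (auto simp: placement_hub)
  qed
next
  case (4 a)
  then show ?thesis using b_ne(1)[of a] by (simp add: placement_b)
next
  case (5 a)
  then show ?thesis using leg_tip[of a] by (simp add: placement_c)
qed

lemma gdist_placement_y: "gdist E y (placement y) \<le> 2"
  using G_y gdist_le_walk[of E y "[G y, b (G y)]"] by (simp add: placement_y)

lemma gdist_placement:
  assumes "v \<in> V"
  shows "gdist E v (placement v) \<le> 3"
  using assms
proof (cases rule: vertex_cases)
  case 1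
  then show ?thesis using gdist_adjacent[of E x y] x_ne_y by (simp add: placement_x)
next
  case 2
  then show ?thesis using gdist_placement_y by simp
next
  case (3 a)
  from 3(1) have "a \<in> insert y A" by simp
  then show ?thesis
  proof (cases rule: hub_image_cases)
    case 1
    then show ?thesis using 3 gdist_le_walk[of E a "[y, x]"] by (simp add: placement_hub)
  next
    case 2
    then show ?thesis using 3 gdist_le_walk[of E a "[y, G a, b (G a)]"] by (simp add: placement_hub)
  qed
next
  case (4 a)
  then show ?thesis
    using gdist_le_walk[of E "b a" "[a]"] gdist_le_walk[of E "b a" "[c a]"] placement_b[of a]
    by (cases "c a = b a") simp_all
next
  case (5 a)
  then show ?thesis using gdist_le_walk[of E "c a" "[b a, a]"] by (simp add: placement_c)
qed

lemma separated_x_y: "separated (placement x) (placement y)"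
  using G_y b_ne(2)[of "G y"] b_notin_A[of "G y"] gdist_le_walk[of E y "[G y, b (G y)]"] adj_y[of "b (G y)"]
  by (simp add: separated_def placement_x placement_y)

lemma separated_y_A:
  assumes a: "a \<in> A"
  shows "separated (placement y) (placement a)"
  using insertI2[OF a]
proof (cases rule: hub_image_cases)
  case 1
  have "\<not> E (b (G y)) x" using b_ne(3)[of "G y"] adj_x sym G_y by blast
  then show ?thesis
    using 1 a G_y gdist_le_walk[of E "b (G y)" "[G y, y, x]"]
    by (simp add: separated_def placement_hub placement_y)
next
  case 2
  moreover have "G a \<noteq> G y" using G_inj a y_notin_A by blast
  ultimately show ?thesis
    using a G_y legs_nonadjacent[of "G y" "G a" "b (G y)" "b (G a)"]
      gdist_le_walk[of E "b (G y)" "[G y, y, G a, b (G a)]"]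
    by (simp add: separated_def placement_hub placement_y)
qed

lemma separated_A_b:
  assumes a: "a \<in> A"
  shows "separated (placement a) (placement (b a))"
proof (cases rule: hub_image_cases[OF insertI2[OF a]])
  case 1
  then show ?thesis
    using a y_notin_leg adj_x gdist_le_walk[of E x "[y, a]"] gdist_le_walk[of E x "[y, a, b a, c a]"]
    by (cases "c a = b a") (auto simp: separated_def placement_hub placement_b)
next
  case 2
  then have "G a \<noteq> a" "G a \<in> A" using a G_no_fixpoint by auto
  then show ?thesis
    using 2 a legs_nonadjacent[of "G a" a "b (G a)"]
      gdist_le_walk[of E "b (G a)" "[G a, y, a]"] gdist_le_walk[of E "b (G a)" "[G a, y, a, b a, c a]"]
    by (cases "c a = b a") (auto simp: separated_def placement_hub placement_b)
qed

lemma separated_b_c: "a \<in> A \<Longrightarrow> c a \<noteq> b a \<Longrightarrow> separated (placement (b a)) (placement (c a))"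
  using long_leg[of a] sym gdist_le_walk[of E "c a" "[b a, a]"]
  by (auto simp: separated_def placement_b placement_c)

lemma separated_edge:
  assumes "E u v"
  shows "separated (placement u) (placement v)"
proof -
  have swap: "separated (placement u) (placement v)"
    if "separated (placement p) (placement q)" "{u, v} = {p, q}" for p q
    using that separated_commute by (metis doubleton_eq_iff)
  from assms show ?thesis
    by (cases rule: edge_cases) (use swap separated_x_y separated_y_A separated_A_b separated_b_c in blast)+
qed

lemma placement_good: "good_2_placement V E x placement"
  unfolding good_2_placement_def
proof (intro conjI allI impI ballI)
  show "gdist E x (placement x) = 1"
    using gdist_adjacent[of E x y] x_ne_y by (simp add: placement_x)
  show "gdist E w (placement w) \<le> 2" if "E x w" for w
    using that adj_x gdist_placement_y by simp
  show "gdist E w (placement w) \<le> 4" if "w \<in> V" for w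
    using gdist_placement[OF that] by simp
qed (use placement_bij placement_no_fixpoint separated_edge in \<open>auto simp: separated_def\<close>)

end

context spider
begin

lemma good_2_placement_exists: "\<exists>\<sigma>. good_2_placement V E x \<sigma>"
proof -
  obtain G where "bij_betw G (insert y A) (insert x A)" "G y \<in> A" "\<And>a. a \<in> A \<Longrightarrow> G a \<noteq> a"
    using shift_bijection_exists[OF finite_A A_nonempty x_notin_A y_notin_A] by blast
  then interpret spider_shift V E x y A b c G
    by unfold_locales
  show ?thesis using placement_good by blast
qed

end

section \<open>The hypotheses describe a spider\<close>

lemma adjacent_iff_of_degree_1:
  assumes "simple_graph V E" "E x y" "degree V E x = 1"
  shows "E x w \<longleftrightarrow> w = y"
proof -
  have "{w \<in> V. E x w} = {y}"
    using assms card_1_singletonE[of "{w \<in> V. E x w}"] unfolding simple_graph_def degree_def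
    by (metis (mono_tags, lifting) mem_Collect_eq singletonD)
  then show ?thesis using assms(1,2) unfolding simple_graph_def by blast
qed

lemma connected_covered_by_branches:
  assumes "connected_graph V E" "y \<in> V" "v \<in> V"
  shows "v = y \<or> (\<exists>a. E y a \<and> v \<in> branch E a y)"
proof -
  have "\<forall>u\<in>V. \<forall>v\<in>V. \<exists>xs. walk E xs \<and> hd xs = u \<and> last xs = v"
    using assms(1) unfolding connected_graph_def by (rule conjunct2)
  then obtain xs where "walk E xs" "hd xs = y" "last xs = v" using assms(2,3) by blast
  then show ?thesis using walk_from_hub[of E xs y] by simp
qed

lemma neighbor_F_tree_card_le_3:
  assumes "neighbor_F_tree E a y"
  shows "finite (branch E a y)" "card (branch E a y) \<le> 3"
proof -
  obtain vs where "path_seq (branch E a y) (del_edge E a y) vs" "length vs \<le> 3"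
    using assms unfolding neighbor_F_tree_def by blast
  moreover from this(1) have "set vs = branch E a y" unfolding path_seq_def by blast
  ultimately show "finite (branch E a y)" "card (branch E a y) \<le> 3"
    using card_length[of vs] List.finite_set[of vs] by simp_all
qed

lemma hub_notin_small_branch:
  assumes "simple_graph V E" "3 \<le> degree V E y" "finite (branch E a y)" "card (branch E a y) \<le> 3"
  shows "y \<notin> branch E a y"
proof
  assume "y \<in> branch E a y"
  have "insert y {w \<in> V. E y w} \<subseteq> insert y {w. E y w}" by blast
  also have "\<dots> \<subseteq> branch E a y" by (rule branch_absorbs_hub_neighbours) fact
  finally have "insert y {w \<in> V. E y w} \<subseteq> branch E a y" .
  then have "card (insert y {w \<in> V. E y w}) \<le> 3"
    using card_mono[OF assms(3)] assms(4) by (meson order_trans)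
  moreover have "finite V" "\<not> E y y" using assms(1) by (simp_all add: simple_graph_def)
  ultimately show False using assms(2) unfolding degree_def by simp
qed

lemma neighbor_F_tree_shape:
  assumes "neighbor_F_tree E a y" "card (branch E a y) \<noteq> 1" "y \<notin> branch E a y"
  obtains b c where "branch E a y = {a, b, c}" "a \<noteq> b" "E a b" "c \<noteq> a" "c = b \<or> E b c \<and> \<not> E a c"
proof -
  obtain vs where vs: "path_seq (branch E a y) (del_edge E a y) vs" "length vs \<le> 3"
    "length vs = 3 \<Longrightarrow> a = hd vs \<or> a = last vs"
    using assms(1) unfolding neighbor_F_tree_def by blast
  have "vs \<noteq> []" "distinct vs" "set vs = branch E a y"
    using vs(1) unfolding path_seq_def by blast+
  then have "card (branch E a y) = length vs" "length vs \<noteq> 0" using distinct_card by fastforce+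
  then have "2 \<le> length vs" using assms(2) by linarith
  then obtain b c where bc: "branch E a y = {a, b, c}" "a \<noteq> b" "del_edge E a y a b" "c \<noteq> a"
    "c = b \<or> del_edge E a y b c \<and> \<not> del_edge E a y a c"
    using path_seq_end_shape[OF vs(1) _ vs(2) branch_self vs(3)] by blast
  have "del_edge E a y u v \<longleftrightarrow> E u v" if "u \<in> {a, b, c}" "v \<in> {a, b, c}" for u v
    using that assms(3) bc(1) unfolding del_edge_def by (auto simp: doubleton_eq_iff)
  then show thesis using that[of b c] bc by simp
qed

lemma exists_other_neighbour:
  assumes "2 \<le> degree V E y"
  obtains a where "E y a" "a \<noteq> x"
proof (rule ccontr)
  assume "\<not> thesis"
  then have "{w \<in> V. E y w} \<subseteq> {x}" using that by blast
  then have "degree V E y \<le> 1" unfolding degree_def using card_mono[of "{x}"] by fastforce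
  then show False using assms by linarith
qed

lemma F_branches_are_legs:
  assumes sg: "simple_graph V E" and deg: "3 \<le> degree V E y"
    and F: "\<And>a. E y a \<Longrightarrow> a \<noteq> x \<Longrightarrow> neighbor_F_tree E a y \<and> card (branch E a y) \<noteq> 1"
  shows "\<exists>b c. \<forall>a. E y a \<and> a \<noteq> x \<longrightarrow> y \<notin> branch E a y \<and> branch E a y = {a, b a, c a}
      \<and> a \<noteq> b a \<and> E a (b a) \<and> c a \<noteq> a \<and> (c a = b a \<or> E (b a) (c a) \<and> \<not> E a (c a))"
proof -
  have "\<exists>b c. y \<notin> branch E a y \<and> branch E a y = {a, b, c} \<and> a \<noteq> b \<and> E a b \<and> c \<noteq> a
      \<and> (c = b \<or> E b c \<and> \<not> E a c)" if "E y a \<and> a \<noteq> x" for a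
  proof -
    have Fa: "neighbor_F_tree E a y" "card (branch E a y) \<noteq> 1" using F that by simp_all
    from Fa(1) have "finite (branch E a y)" "card (branch E a y) \<le> 3" by (rule neighbor_F_tree_card_le_3)+
    then have "y \<notin> branch E a y" by (rule hub_notin_small_branch[OF sg deg])
    with neighbor_F_tree_shape[OF Fa this] show ?thesis by blast
  qed
  then show ?thesis by metis
qed

lemma spider_of_F_branches:
  assumes sg: "simple_graph V E" and conn: "connected_graph V E"
    and xy: "E x y" "degree V E x = 1" "3 \<le> degree V E y"
    and F: "\<And>a. E y a \<Longrightarrow> a \<noteq> x \<Longrightarrow> neighbor_F_tree E a y \<and> card (branch E a y) \<noteq> 1"
  obtains b c where "spider V E x y {w. E y w \<and> w \<noteq> x} b c"
proof -
  define A where "A = {w. E y w \<and> w \<noteq> x}"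
  have sym: "\<And>u v. E u v \<Longrightarrow> E v u" and irrefl: "\<And>u. \<not> E u u"
    and adj_in_V: "\<And>u v. E u v \<Longrightarrow> u \<in> V" and fin: "finite V"
    using sg unfolding simple_graph_def by blast+
  have adj_x: "E x w \<longleftrightarrow> w = y" for w using adjacent_iff_of_degree_1[OF sg xy(1,2)] .
  obtain b c where legs: "\<forall>a. E y a \<and> a \<noteq> x \<longrightarrow> y \<notin> branch E a y \<and> branch E a y = {a, b a, c a}
      \<and> a \<noteq> b a \<and> E a (b a) \<and> c a \<noteq> a \<and> (c a = b a \<or> E (b a) (c a) \<and> \<not> E a (c a))"
    using F_branches_are_legs[OF sg xy(3) F] by blast
  have hub: "y \<notin> branch E a y" and leg: "branch E a y = {a, b a, c a}"
    and shape: "a \<noteq> b a \<and> E a (b a) \<and> c a \<noteq> a \<and> (c a = b a \<or> E (b a) (c a) \<and> \<not> E a (c a))"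
    if "a \<in> A" for a
    using legs that unfolding A_def by blast+
  have "spider V E x y A b c"
  proof
    show "E u v \<Longrightarrow> E v u" "\<not> E u u" "E u v \<Longrightarrow> u \<in> V" for u v
      by (fact sym irrefl adj_in_V)+
    show "finite V" by (fact fin)
    show "E x w \<longleftrightarrow> w = y" for w by (fact adj_x)
    show "E y w \<longleftrightarrow> w = x \<or> w \<in> A" for w using xy(1) sym unfolding A_def by blast
    show "A \<noteq> {}" using exists_other_neighbour[of V E y x] xy(3) unfolding A_def by auto
    show "x \<notin> A" by (simp add: A_def)
    show "v = x \<or> v = y \<or> (\<exists>a\<in>A. v \<in> {a, b a, c a})" if "v \<in> V" for v
    proof -
      have "branch E x y = {x}" using adj_x by (intro branch_at_leaf) simp
      moreover have "y \<in> V" using adj_in_V sym xy(1) by blast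
      ultimately show ?thesis
        using connected_covered_by_branches[OF conn _ that] leg unfolding A_def by blast
    qed
    show "a = a'" if "a \<in> A" "a' \<in> A" "v \<in> {a, b a, c a}" "v \<in> {a', b a', c a'}" for a a' v
    proof (rule ccontr)
      assume "a \<noteq> a'"
      moreover have "E y a'" using that(2) by (simp add: A_def)
      ultimately have "branch E a y \<inter> branch E a' y = {}"
        using branches_disjoint[of E y a' a, OF sym] hub that(1,2) by blast
      then show False using that leg by blast
    qed
    show "y \<notin> {a, b a, c a}" if "a \<in> A" for a using hub[OF that] leg[OF that] by simp
    show "v \<in> {a, b a, c a} \<or> u = a \<and> v = y" if "a \<in> A" "u \<in> {a, b a, c a}" "E u v" for a u v
      using branch_closed[of u E a y v] hub[OF that(1)] leg[OF that(1)] that(2,3) by simp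
    show "E a (b a)" "c a \<noteq> a" if "a \<in> A" for a using shape[OF that] by simp_all
    show "E (b a) (c a) \<and> \<not> E a (c a)" if "a \<in> A" "c a \<noteq> b a" for a
      using shape[OF that(1)] that(2) by simp
  qed
  then show thesis using that unfolding A_def by blast
qed

theorem lemma3p10:
  fixes V :: "'a set" and E :: "'a \<Rightarrow> 'a \<Rightarrow> bool" and x y :: 'a
  assumes "is_tree V E"
    and "\<not> is_star V E"
    and "E x y"
    and "degree V E x = 1"
    and "degree V E y \<ge> 3"
    and "\<And>y'. E y y' \<Longrightarrow> y' \<noteq> x \<Longrightarrow>
           neighbor_F_tree E y' y \<and> card (branch E y' y) \<noteq> 1"
  shows "\<exists>\<sigma>. good_2_placement V E x \<sigma>"
proof -
  have "simple_graph V E" "connected_graph V E" using assms(1) unfolding is_tree_def by blast+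
  then obtain b c where "spider V E x y {w. E y w \<and> w \<noteq> x} b c"
    using assms(3-6) by (rule spider_of_F_branches)
  then show ?thesis by (rule spider.good_2_placement_exists)
qed

end
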